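(* Let $k=\mathbb R$ or $\mathbb C$, let $(E,g)$ be a finite-dimensional inner product vector space over $k$, let $f\in\operatorname{End}_k(E)$, and let $\mathcal H_f=\{H_1,\dots,H_n\}$ be a family of $f$-invariant subspaces of $E$ with $E=H_1\oplus\dots\oplus H_n$ and $H_i\subseteq\big[\sum_{j\ne i}H_j\big]^\perp$ for all $i\in\{1,\dots,n\}$. Then $f^+_{\mathcal H_f}=f^\dagger$.
   Context: An inner product is linear in the first argument, conjugate-symmetric and positive definite; $U^\perp=\{e\in E:g(u,e)=0\ \forall u\in U\}$. For $f\in\operatorname{End}_k(E)$, its Moore-Penrose inverse $f^\dagger\in\operatorname{End}_k(E)$ is the linear map equal to $(f|_{[\operatorname{Ker} f]^\perp})^{-1}$ on $\operatorname{Im} f$ and to $0$ on $[\operatorname{Im} f]^\perp$. With $f_i=f|_{H_i}\in\operatorname{End}_k(H_i)$ and $H_i$ carrying the restricted inner product, $f^+_{\mathcal H_f}$ is the unique endomorphism of $E$ with $f^+_{\mathcal H_f}|_{H_i}=f_i^\dagger$ for each $i$. *)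

theory Defs
  imports Complex_Main
begin

text \<open>The scalar field k is R or C (as a real algebra), with cj its conjugation:
  either every scalar is real and cj is the identity, or k = R + iR with i*i = -1
  and cj the usual complex conjugation.\<close>
definition RorC :: "('k::real_field \<Rightarrow> 'k) \<Rightarrow> bool" where
  "RorC cj \<longleftrightarrow>
     ((\<forall>x::'k. \<exists>r. x = of_real r) \<and> (\<forall>x. cj x = x)) \<or>
     (\<exists>\<iota>::'k. \<iota> * \<iota> = -1 \<and> (\<forall>x. \<exists>a b. x = of_real a + \<iota> * of_real b) \<and>
        (\<forall>a b. cj (of_real a + \<iota> * of_real b) = of_real a - \<iota> * of_real b))"

definition inner_product_space ::
  "('k::real_field \<Rightarrow> 'v::ab_group_add \<Rightarrow> 'v) \<Rightarrow> ('k \<Rightarrow> 'k) \<Rightarrow> ('v \<Rightarrow> 'v \<Rightarrow> 'k) \<Rightarrow> bool" where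
  "inner_product_space scale cj g \<longleftrightarrow> vector_space scale \<and>
     (\<forall>a u v w. g (scale a u + v) w = a * g u w + g v w) \<and>
     (\<forall>u v. g u v = cj (g v u)) \<and>
     (\<forall>e. e \<noteq> 0 \<longrightarrow> (\<exists>r>0. g e e = of_real r))"

definition orth_in :: "('v \<Rightarrow> 'v \<Rightarrow> 'k::zero) \<Rightarrow> 'v set \<Rightarrow> 'v set \<Rightarrow> 'v set" where
  "orth_in g S U = {e \<in> S. \<forall>u\<in>U. g u e = 0}"

definition ker_in :: "'v set \<Rightarrow> ('v \<Rightarrow> 'v::zero) \<Rightarrow> 'v set" where
  "ker_in S f = {x \<in> S. f x = 0}"

definition linear_on :: "('k \<Rightarrow> 'v::ab_group_add \<Rightarrow> 'v) \<Rightarrow> 'v set \<Rightarrow> ('v \<Rightarrow> 'v) \<Rightarrow> bool" where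
  "linear_on scale S h \<longleftrightarrow>
     (\<forall>a x y. x \<in> S \<longrightarrow> y \<in> S \<longrightarrow> h (scale a x + y) = scale a (h x) + h y)"

text \<open>Moore-Penrose inverse of the endomorphism f|_S of the subspace S (with the restricted
  inner product): the linear map on S equal to (f restricted to Ker-perp)^{-1} on Im f and 0 on (Im f)-perp;
  normalised to be 0 outside S.\<close>
definition MP_inverse_on ::
  "('k::zero \<Rightarrow> 'v::ab_group_add \<Rightarrow> 'v) \<Rightarrow> ('v \<Rightarrow> 'v \<Rightarrow> 'k) \<Rightarrow> 'v set \<Rightarrow> ('v \<Rightarrow> 'v) \<Rightarrow> ('v \<Rightarrow> 'v)" where
  "MP_inverse_on scale g S f = (THE h. linear_on scale S h \<and> (\<forall>x. x \<notin> S \<longrightarrow> h x = 0) \<and>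
      (\<forall>y \<in> f ` S. h y \<in> orth_in g S (ker_in S f) \<and> f (h y) = y) \<and>
      (\<forall>y \<in> orth_in g S (f ` S). h y = 0))"

definition MP_inverse ::
  "('k::zero \<Rightarrow> 'v::ab_group_add \<Rightarrow> 'v) \<Rightarrow> ('v \<Rightarrow> 'v \<Rightarrow> 'k) \<Rightarrow> ('v \<Rightarrow> 'v) \<Rightarrow> ('v \<Rightarrow> 'v)" where
  "MP_inverse scale g f = MP_inverse_on scale g UNIV f"

definition sum_subspaces :: "(nat \<Rightarrow> 'v::comm_monoid_add set) \<Rightarrow> nat set \<Rightarrow> 'v set" where
  "sum_subspaces H I = {sum x I | x. \<forall>i\<in>I. x i \<in> H i}"

definition is_direct_sum :: "(nat \<Rightarrow> 'v::comm_monoid_add set) \<Rightarrow> nat set \<Rightarrow> bool" where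
  "is_direct_sum H I \<longleftrightarrow>
     (\<forall>e. \<exists>x. (\<forall>i\<in>I. x i \<in> H i) \<and> e = sum x I) \<and>
     (\<forall>x y. (\<forall>i\<in>I. x i \<in> H i \<and> y i \<in> H i) \<longrightarrow> sum x I = sum y I \<longrightarrow> (\<forall>i\<in>I. x i = y i))"

definition adapted_inverse ::
  "('k::field \<Rightarrow> 'v::ab_group_add \<Rightarrow> 'v) \<Rightarrow> ('v \<Rightarrow> 'v \<Rightarrow> 'k) \<Rightarrow> ('v \<Rightarrow> 'v) \<Rightarrow> (nat \<Rightarrow> 'v set) \<Rightarrow> nat set \<Rightarrow> ('v \<Rightarrow> 'v)" where
  "adapted_inverse scale g f H I = (THE h. Vector_Spaces.linear scale scale h \<and>
      (\<forall>i\<in>I. \<forall>x\<in>H i. h x = MP_inverse_on scale g (H i) f x))"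

end

theory Submission
  imports Defs
begin

text \<open>In finite dimension every subspace has an orthogonal projection, so the Moore-Penrose
  inverse of f on an f-invariant subspace S exists and is the unique map that inverts f on f S
  from the part of S orthogonal to the kernel and vanishes on the part of S orthogonal to f S.
  Since the H i are mutually orthogonal and f-invariant, kernel and image of f split along them.
  Hence, writing M for the Moore-Penrose inverse of f: for y in f (H i) the components of M y
  outside H i lie in the kernel and are orthogonal to M y, so they vanish; and the part of H i
  orthogonal to f (H i) is orthogonal to the whole image of f, so M kills it. Thus M restricted
  to H i satisfies the characterisation of the Moore-Penrose inverse of f on H i, and a linear
  map is determined by its restrictions to the summands of a direct sum.\<close>

lemma (in vector_space) linear_on_UNIV_imp_linear:
  assumes "linear_on scale UNIV h"
  shows "Vector_Spaces.linear scale scale h"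
proof -
  have scale_add: "h (c *s x + y) = c *s h x + h y" for c x y
    using assms unfolding linear_on_def by blast
  have "h 0 = 0"
    using scale_add[of 1 0 0] by simp
  then show ?thesis
    unfolding Vector_Spaces.linear_iff using vector_space_axioms scale_add[of 1] scale_add[of _ _ 0] by simp
qed

locale fd_inner_product_space = finite_dimensional_vector_space scale Basis
  for scale :: "'k::real_field \<Rightarrow> 'v::ab_group_add \<Rightarrow> 'v" (infixr \<open>*s\<close> 75)
    and Basis :: "'v set" +
  fixes cj :: "'k \<Rightarrow> 'k" and g :: "'v \<Rightarrow> 'v \<Rightarrow> 'k"
  assumes inner_product: "inner_product_space scale cj g"
begin

lemma inner_scale_add_left: "g (a *s u + v) w = a * g u w + g v w"
  using inner_product unfolding inner_product_space_def by blast

lemma inner_commute_conj: "g u v = cj (g v u)"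
  using inner_product unfolding inner_product_space_def by blast

lemma inner_self_pos: "e \<noteq> 0 \<Longrightarrow> \<exists>r>0. g e e = of_real r"
  using inner_product unfolding inner_product_space_def by blast

lemma inner_zero_left [simp]: "g 0 w = 0"
  using inner_scale_add_left[of 1 0 0 w] by simp

lemma inner_eq_zero_sym: "g u v = 0 \<longleftrightarrow> g v u = 0"
  by (metis inner_commute_conj inner_zero_left)

lemma inner_zero_right [simp]: "g w 0 = 0"
  using inner_eq_zero_sym by simp

lemma inner_scale_left: "g (a *s u) w = a * g u w"
  using inner_scale_add_left[of a u 0 w] by simp

lemma inner_add_left: "g (u + v) w = g u w + g v w"
  using inner_scale_add_left[of 1 u v w] by simp

lemma inner_diff_left: "g (u - v) w = g u w - g v w"
  using inner_scale_add_left[of "-1" v u w] by simp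

lemma inner_sum_left: "g (sum u A) w = (\<Sum>a\<in>A. g (u a) w)"
  by (induct A rule: infinite_finite_induct) (simp_all add: inner_add_left)

lemma inner_self_eq_zero: "g e e = 0 \<longleftrightarrow> e = 0"
  using inner_self_pos[of e] by force

lemma subspace_inner_eq_zero: "subspace {u. g u e = 0}"
  unfolding subspace_def by (simp add: inner_add_left inner_scale_left)

abbreviation orth :: "'v set \<Rightarrow> 'v set" where
  "orth U \<equiv> orth_in g UNIV U"

lemma mem_orth: "e \<in> orth U \<longleftrightarrow> (\<forall>u\<in>U. g u e = 0)"
  by (simp add: orth_in_def)

lemma orth_in_eq_Int: "orth_in g S U = S \<inter> orth U"
  by (auto simp: orth_in_def)

lemma mem_orth_left: "e \<in> orth U \<longleftrightarrow> (\<forall>u\<in>U. g e u = 0)"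
  using inner_eq_zero_sym unfolding mem_orth by blast

lemma subspace_orth: "subspace (orth U)"
  unfolding subspace_def by (auto simp: mem_orth_left inner_add_left inner_scale_left)

lemma orth_span: "orth (span B) = orth B"
proof
  show "orth (span B) \<subseteq> orth B"
    using span_superset unfolding orth_in_def by blast
  show "orth B \<subseteq> orth (span B)"
  proof
    fix e
    assume "e \<in> orth B"
    then have "span B \<subseteq> {u. g u e = 0}"
      unfolding mem_orth by (intro span_minimal subspace_inner_eq_zero) blast
    then show "e \<in> orth (span B)"
      unfolding mem_orth by blast
  qed
qed

lemma mem_orth_self: "d \<in> U \<Longrightarrow> d \<in> orth U \<Longrightarrow> d = 0"
  using inner_self_eq_zero unfolding mem_orth by blast

lemma orth_decomposition_span:
  assumes "finite B"
  shows "\<exists>u\<in>span B. x - u \<in> orth B"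
  using assms
proof (induction B arbitrary: x)
  case empty
  show ?case by (simp add: orth_in_def span_zero)
next
  case (insert b B)
  obtain u where u: "u \<in> span B" "x - u \<in> orth B"
    using insert.IH by blast
  obtain v where v: "v \<in> span B" "b - v \<in> orth B"
    using insert.IH by blast
  define b' where "b' = b - v"
  \<comment> \<open>Gram-Schmidt step; if \<open>b' = 0\<close> then \<open>c = 0\<close> by division by zero.\<close>
  define c where "c = g (x - u) b' / g b' b'"
  define u' where "u' = u + c *s b'"
  have span_B: "span B \<subseteq> span (insert b B)"
    by (rule span_mono) blast
  have "b' \<in> span (insert b B)"
    unfolding b'_def using v(1) span_B by (blast intro: span_diff span_base)
  then have u'_span: "u' \<in> span (insert b B)"
    unfolding u'_def using u(1) span_B by (blast intro: span_add span_scale)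
  have "x - u' = (x - u) - c *s b'"
    unfolding u'_def by simp
  then have orth_B: "x - u' \<in> orth B"
    using u(2) v(2) subspace_orth unfolding b'_def by (metis subspace_diff subspace_scale)
  have "g (x - u') b' = 0"
    by (cases "b' = 0") (simp_all add: u'_def c_def inner_diff_left inner_add_left
        inner_scale_left inner_self_eq_zero)
  then have orth_b': "g b' (x - u') = 0"
    using inner_eq_zero_sym by blast
  have "x - u' \<in> orth (span B)"
    using orth_B orth_span by simp
  then have "g v (x - u') = 0"
    using v(1) unfolding mem_orth by blast
  then have "g b (x - u') = 0"
    using orth_b' unfolding b'_def by (simp add: inner_diff_left)
  with orth_B have "x - u' \<in> orth (insert b B)"
    unfolding mem_orth by blast
  with u'_span show ?case by blast
qed

lemma orth_decomposition:
  assumes "subspace U"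
  shows "\<exists>u\<in>U. x - u \<in> orth U"
proof -
  obtain B where B: "B \<subseteq> U" "independent B" "U \<subseteq> span B"
    by (rule basis_exists)
  then have "span B = U"
    using assms span_subspace by blast
  then show ?thesis
    using orth_decomposition_span[OF finiteI_independent[OF B(2)], of x] orth_span by metis
qed

lemma orth_decomposition_unique:
  assumes "subspace U" "u1 \<in> U" "u2 \<in> U" "x - u1 \<in> orth U" "x - u2 \<in> orth U"
  shows "u1 = u2"
proof -
  have "u1 - u2 = (x - u2) - (x - u1)"
    by simp
  then have "u1 - u2 \<in> orth U"
    using assms(4,5) subspace_orth subspace_diff by metis
  then show ?thesis
    using mem_orth_self[of "u1 - u2"] assms(1-3) subspace_diff by auto
qed

definition proj :: "'v set \<Rightarrow> 'v \<Rightarrow> 'v" where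
  "proj U x = (SOME u. u \<in> U \<and> x - u \<in> orth U)"

lemma
  assumes "subspace U"
  shows proj_in: "proj U x \<in> U"
    and proj_orth: "x - proj U x \<in> orth U"
  using someI_ex[OF orth_decomposition[OF assms, of x, unfolded Bex_def]]
  unfolding proj_def by blast+

lemma proj_eqI: "subspace U \<Longrightarrow> u \<in> U \<Longrightarrow> x - u \<in> orth U \<Longrightarrow> proj U x = u"
  using orth_decomposition_unique proj_in proj_orth by blast

lemma proj_scale_add:
  assumes U: "subspace U"
  shows "proj U (a *s x + y) = a *s proj U x + proj U y"
proof (rule proj_eqI[OF U])
  show "a *s proj U x + proj U y \<in> U"
    using U proj_in[OF U] by (simp add: subspace_add subspace_scale)
  have "a *s (x - proj U x) + (y - proj U y) \<in> orth U"
    using proj_orth[OF U] subspace_orth by (simp add: subspace_add subspace_scale)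
  then show "a *s x + y - (a *s proj U x + proj U y) \<in> orth U"
    by (simp add: algebra_simps)
qed

definition is_MP_inverse_on :: "'v set \<Rightarrow> ('v \<Rightarrow> 'v) \<Rightarrow> ('v \<Rightarrow> 'v) \<Rightarrow> bool" where
  "is_MP_inverse_on S f h \<longleftrightarrow> linear_on scale S h \<and> (\<forall>x. x \<notin> S \<longrightarrow> h x = 0) \<and>
     (\<forall>y \<in> f ` S. h y \<in> orth_in g S (ker_in S f) \<and> f (h y) = y) \<and>
     (\<forall>y \<in> orth_in g S (f ` S). h y = 0)"

context
  fixes S :: "'v set" and f :: "'v \<Rightarrow> 'v"
  assumes subspace_S: "subspace S"
    and linear_f: "Vector_Spaces.linear scale scale f"
    and invariant_S: "f ` S \<subseteq> S"
begin

interpretation f: Vector_Spaces.linear scale scale f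
  by (fact linear_f)

lemma subspace_ker_in: "subspace (ker_in S f)"
proof -
  have "ker_in S f = S \<inter> {x. f x = 0}"
    unfolding ker_in_def by blast
  then show ?thesis
    using subspace_S f.subspace_kernel by (simp add: subspace_inter)
qed

lemma subspace_orth_ker_in: "subspace (orth_in g S (ker_in S f))"
  by (subst orth_in_eq_Int) (rule subspace_inter[OF subspace_S subspace_orth])

lemma inj_on_orth_ker_in: "inj_on f (orth_in g S (ker_in S f))"
proof (subst f.inj_on_iff_eq_0[OF subspace_orth_ker_in], intro ballI impI)
  fix x
  assume "x \<in> orth_in g S (ker_in S f)" and "f x = 0"
  then have "x \<in> ker_in S f" and "x \<in> orth (ker_in S f)"
    unfolding orth_in_def ker_in_def by auto
  then show "x = 0"
    by (rule mem_orth_self)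
qed

lemma image_orth_ker_in: "f ` orth_in g S (ker_in S f) = f ` S"
proof
  show "f ` orth_in g S (ker_in S f) \<subseteq> f ` S"
    unfolding orth_in_def by blast
  show "f ` S \<subseteq> f ` orth_in g S (ker_in S f)"
  proof
    fix y
    assume "y \<in> f ` S"
    then obtain s where s: "s \<in> S" "y = f s"
      by blast
    let ?p = "proj (ker_in S f) s"
    have p: "?p \<in> S" "f ?p = 0"
      using proj_in[OF subspace_ker_in] unfolding ker_in_def by blast+
    then have "s - ?p \<in> orth_in g S (ker_in S f)"
      using s(1) subspace_S proj_orth[OF subspace_ker_in]
      unfolding orth_in_def by (blast intro: subspace_diff)
    moreover have "f (s - ?p) = y"
      using p s by (simp add: f.diff)
    ultimately show "y \<in> f ` orth_in g S (ker_in S f)"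
      by blast
  qed
qed

lemma subspace_image_f: "subspace (f ` S)"
  by (rule f.subspace_image[OF subspace_S])

lemma is_MP_inverse_on_proj_image:
  assumes h: "is_MP_inverse_on S f h" and x: "x \<in> S"
  shows "h x = h (proj (f ` S) x)"
proof -
  let ?p = "proj (f ` S) x"
  have p: "?p \<in> S"
    using proj_in[OF subspace_image_f] invariant_S by blast
  have "x - ?p \<in> orth_in g S (f ` S)"
    using proj_orth[OF subspace_image_f] x p subspace_S
    unfolding orth_in_def by (blast intro: subspace_diff)
  then have "h (x - ?p) = 0"
    using h unfolding is_MP_inverse_on_def by blast
  moreover have "h (1 *s ?p + (x - ?p)) = 1 *s h ?p + h (x - ?p)"
    using h p x subspace_S unfolding is_MP_inverse_on_def linear_on_def
    by (blast intro: subspace_diff)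
  ultimately show ?thesis
    by simp
qed

lemma is_MP_inverse_on_unique:
  assumes h1: "is_MP_inverse_on S f h1" and h2: "is_MP_inverse_on S f h2"
  shows "h1 = h2"
proof
  fix x
  show "h1 x = h2 x"
  proof (cases "x \<in> S")
    case True
    let ?p = "proj (f ` S) x"
    have "?p \<in> f ` S"
      by (rule proj_in[OF subspace_image_f])
    then have "h1 ?p = h2 ?p"
      using h1 h2 inj_on_orth_ker_in unfolding is_MP_inverse_on_def inj_on_def by metis
    then show ?thesis
      using True is_MP_inverse_on_proj_image[OF h1] is_MP_inverse_on_proj_image[OF h2] by simp
  next
    case False
    then show ?thesis
      using h1 h2 unfolding is_MP_inverse_on_def by simp
  qed
qed

lemma is_MP_inverse_on_exists: "\<exists>h. is_MP_inverse_on S f h"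
proof
  let ?W = "orth_in g S (ker_in S f)" and ?R = "f ` S"
  define Q where "Q = inv_into ?W f"
  have Q: "Q y \<in> ?W" "f (Q y) = y" if "y \<in> ?R" for y
    using that image_orth_ker_in unfolding Q_def by (metis inv_into_into f_inv_into_f)+
  have Q_eqI: "Q y = w" if "w \<in> ?W" "f w = y" for w y
    using that inj_on_orth_ker_in unfolding Q_def by (metis inv_into_f_f)
  define h where "h x = (if x \<in> S then Q (proj ?R x) else 0)" for x
  have proj_R: "proj ?R x \<in> ?R" for x
    by (rule proj_in[OF subspace_image_f])
  have "linear_on scale S h"
    unfolding linear_on_def
  proof (intro allI impI)
    fix a x y
    assume "x \<in> S" "y \<in> S"
    then have "h (a *s x + y) = Q (a *s proj ?R x + proj ?R y)"
      unfolding h_def using subspace_S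
      by (simp add: subspace_add subspace_scale proj_scale_add[OF subspace_image_f])
    also have "\<dots> = a *s Q (proj ?R x) + Q (proj ?R y)"
      using Q[OF proj_R] subspace_orth_ker_in
      by (intro Q_eqI) (simp_all add: subspace_add subspace_scale f.add f.scale)
    also have "\<dots> = a *s h x + h y"
      unfolding h_def using \<open>x \<in> S\<close> \<open>y \<in> S\<close> by simp
    finally show "h (a *s x + y) = a *s h x + h y" .
  qed
  moreover have "h y \<in> ?W \<and> f (h y) = y" if "y \<in> ?R" for y
  proof -
    have "proj ?R y = y"
      using that by (intro proj_eqI[OF subspace_image_f]) (simp_all add: subspace_0 subspace_orth)
    then show ?thesis
      using that invariant_S Q unfolding h_def by auto
  qed
  moreover have "h y = 0" if "y \<in> orth_in g S ?R" for y
  proof -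
    have "y \<in> orth ?R"
      using that unfolding orth_in_def by blast
    then have "proj ?R y = 0"
      by (intro proj_eqI[OF subspace_image_f]) (simp_all add: subspace_image_f subspace_0)
    moreover have "Q 0 = 0"
      using subspace_orth_ker_in by (intro Q_eqI) (simp_all add: subspace_0)
    ultimately show ?thesis
      unfolding h_def by simp
  qed
  ultimately show "is_MP_inverse_on S f h"
    unfolding is_MP_inverse_on_def h_def by auto
qed

lemma is_MP_inverse_on_MP_inverse_on: "is_MP_inverse_on S f (MP_inverse_on scale g S f)"
  unfolding MP_inverse_on_def is_MP_inverse_on_def[symmetric]
  using is_MP_inverse_on_exists is_MP_inverse_on_unique by (metis theI)

lemma MP_inverse_on_eqI: "is_MP_inverse_on S f h \<Longrightarrow> MP_inverse_on scale g S f = h"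
  using is_MP_inverse_on_MP_inverse_on is_MP_inverse_on_unique by blast

end

end

locale orthogonal_invariant_decomposition = fd_inner_product_space scale Basis cj g
  for scale :: "'k::real_field \<Rightarrow> 'v::ab_group_add \<Rightarrow> 'v" (infixr \<open>*s\<close> 75)
    and Basis cj g +
  fixes f :: "'v \<Rightarrow> 'v" and H :: "nat \<Rightarrow> 'v set" and I :: "nat set"
  assumes linear_f: "Vector_Spaces.linear scale scale f"
    and finite_I: "finite I"
    and subspace_H: "i \<in> I \<Longrightarrow> subspace (H i)"
    and invariant_H: "i \<in> I \<Longrightarrow> f ` H i \<subseteq> H i"
    and direct_sum: "is_direct_sum H I"
    and orthogonal_H: "i \<in> I \<Longrightarrow> H i \<subseteq> orth (sum_subspaces H (I - {i}))"
begin

interpretation f: Vector_Spaces.linear scale scale f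
  by (fact linear_f)

lemma direct_sum_decomposition:
  obtains x where "\<forall>i\<in>I. x i \<in> H i" "e = sum x I"
  using direct_sum unfolding is_direct_sum_def by blast

lemma direct_sum_unique:
  "\<forall>i\<in>I. x i \<in> H i \<Longrightarrow> \<forall>i\<in>I. y i \<in> H i \<Longrightarrow> sum x I = sum y I \<Longrightarrow> i \<in> I \<Longrightarrow> x i = y i"
  using direct_sum unfolding is_direct_sum_def by blast

lemma orthogonal_summands:
  assumes "i \<in> I" "j \<in> I" "i \<noteq> j" "u \<in> H j" "w \<in> H i"
  shows "g u w = 0"
proof -
  have "u \<in> sum_subspaces H (I - {i})"
    unfolding sum_subspaces_def
  proof (intro CollectI exI[of _ "\<lambda>l. if l = j then u else 0"] conjI ballI)
    show "u = (\<Sum>l\<in>I - {i}. if l = j then u else 0)"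
      using assms finite_I by simp
    show "(if l = j then u else 0) \<in> H l" if "l \<in> I - {i}" for l
      using that assms subspace_H subspace_0 by auto
  qed
  moreover have "w \<in> orth (sum_subspaces H (I - {i}))"
    using orthogonal_H assms(1,5) by blast
  ultimately show ?thesis
    by (simp add: orth_in_def)
qed

lemma inner_sum_summands:
  assumes "\<forall>l\<in>I. x l \<in> H l" "i \<in> I" "w \<in> H i"
  shows "g (sum x I) w = g (x i) w"
proof -
  have "g (sum x I) w = (\<Sum>l\<in>I. g (x l) w)"
    by (rule inner_sum_left)
  also have "\<dots> = g (x i) w + (\<Sum>l\<in>I - {i}. g (x l) w)"
    using assms(2) finite_I by (simp add: sum.remove)
  also have "(\<Sum>l\<in>I - {i}. g (x l) w) = 0"
    using assms by (intro sum.neutral) (auto intro: orthogonal_summands)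
  finally show ?thesis
    by simp
qed

lemma summand_image_outside:
  assumes x: "\<forall>l\<in>I. x l \<in> H l" and "f (sum x I) \<in> H i" "i \<in> I" "j \<in> I" "j \<noteq> i"
  shows "f (x j) = 0"
proof -
  have fx: "\<forall>l\<in>I. f (x l) \<in> H l"
    using x invariant_H by blast
  have single: "\<forall>l\<in>I. (if l = i then f (sum x I) else 0) \<in> H l"
    using assms subspace_H subspace_0 by auto
  have "(\<Sum>l\<in>I. f (x l)) = (\<Sum>l\<in>I. if l = i then f (sum x I) else 0)"
    using assms finite_I by (simp add: f.sum)
  from direct_sum_unique[OF fx single this \<open>j \<in> I\<close>] show ?thesis
    using \<open>j \<noteq> i\<close> by simp
qed

lemma is_MP_inverse_MP_inverse: "is_MP_inverse_on UNIV f (MP_inverse scale g f)"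
  unfolding MP_inverse_def by (rule is_MP_inverse_on_MP_inverse_on) (simp_all add: linear_f)

lemma linear_MP_inverse: "Vector_Spaces.linear scale scale (MP_inverse scale g f)"
  using is_MP_inverse_MP_inverse unfolding is_MP_inverse_on_def by (blast intro: linear_on_UNIV_imp_linear)

lemma MP_inverse_image_H:
  assumes i: "i \<in> I" and y: "y \<in> f ` H i"
  shows "MP_inverse scale g f y \<in> H i"
proof -
  let ?z = "MP_inverse scale g f y"
  have z: "?z \<in> orth (ker_in UNIV f)" "f ?z = y"
    using is_MP_inverse_MP_inverse y unfolding is_MP_inverse_on_def by auto
  obtain x where x: "\<forall>l\<in>I. x l \<in> H l" "?z = sum x I"
    by (rule direct_sum_decomposition)
  have "x j = 0" if j: "j \<in> I" "j \<noteq> i" for j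
  proof -
    \<comment> \<open>\<open>x j\<close> lies in the kernel, so it is orthogonal to \<open>?z\<close> and hence to itself.\<close>
    have "f (x j) = 0"
      using summand_image_outside[OF x(1) _ i j] z(2) x(2) y invariant_H[OF i] by auto
    then have "g (x j) ?z = 0"
      using z(1) unfolding mem_orth ker_in_def by blast
    then have "g (sum x I) (x j) = 0"
      using x(2) inner_eq_zero_sym by simp
    then have "g (x j) (x j) = 0"
      using inner_sum_summands[OF x(1) j(1)] x(1) j(1) by simp
    then show ?thesis
      by (simp add: inner_self_eq_zero)
  qed
  then have "?z = x i"
    using x(2) i finite_I by (simp add: sum.remove)
  then show ?thesis
    using x(1) i by simp
qed

lemma MP_inverse_orth_image_H:
  assumes i: "i \<in> I" and y: "y \<in> orth_in g (H i) (f ` H i)"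
  shows "MP_inverse scale g f y = 0"
proof -
  have "g (f e) y = 0" for e
  proof -
    obtain x where x: "\<forall>l\<in>I. x l \<in> H l" "e = sum x I"
      by (rule direct_sum_decomposition)
    have fx: "\<forall>l\<in>I. f (x l) \<in> H l"
      using x(1) invariant_H by blast
    have "g (f e) y = g (f (x i)) y"
      using inner_sum_summands[OF fx i] y x(2) unfolding orth_in_def by (simp add: f.sum)
    also have "\<dots> = 0"
      using y x(1) i unfolding orth_in_def by blast
    finally show ?thesis .
  qed
  then have "y \<in> orth_in g UNIV (f ` UNIV)"
    unfolding mem_orth by blast
  then show ?thesis
    using is_MP_inverse_MP_inverse unfolding is_MP_inverse_on_def by blast
qed

lemma MP_inverse_on_H:
  assumes i: "i \<in> I"
  shows "MP_inverse_on scale g (H i) f = (\<lambda>x. if x \<in> H i then MP_inverse scale g f x else 0)"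
proof (rule MP_inverse_on_eqI[OF subspace_H[OF i] linear_f invariant_H[OF i]])
  let ?M = "MP_inverse scale g f"
  have M: "linear_on scale UNIV ?M" "\<forall>y \<in> range f. ?M y \<in> orth (ker_in UNIV f) \<and> f (?M y) = y"
    using is_MP_inverse_MP_inverse unfolding is_MP_inverse_on_def by blast+
  have "ker_in (H i) f \<subseteq> ker_in UNIV f"
    unfolding ker_in_def by blast
  then have "?M y \<in> orth_in g (H i) (ker_in (H i) f) \<and> f (?M y) = y" if "y \<in> f ` H i" for y
    using that M(2) MP_inverse_image_H[OF i] unfolding orth_in_def by blast
  moreover have "linear_on scale (H i) (\<lambda>x. if x \<in> H i then ?M x else 0)"
    using M(1) subspace_H[OF i] unfolding linear_on_def by (simp add: subspace_add subspace_scale)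
  ultimately show "is_MP_inverse_on (H i) f (\<lambda>x. if x \<in> H i then ?M x else 0)"
    using invariant_H[OF i] MP_inverse_orth_image_H[OF i]
    unfolding is_MP_inverse_on_def orth_in_def by auto
qed

lemma linear_eq_on_summands:
  assumes h1: "Vector_Spaces.linear scale scale h1" and h2: "Vector_Spaces.linear scale scale h2"
    and eq: "\<forall>i\<in>I. \<forall>x\<in>H i. h1 x = h2 x"
  shows "h1 = h2"
proof
  fix e
  interpret h1: Vector_Spaces.linear scale scale h1 by (fact h1)
  interpret h2: Vector_Spaces.linear scale scale h2 by (fact h2)
  obtain x where x: "\<forall>l\<in>I. x l \<in> H l" "e = sum x I"
    by (rule direct_sum_decomposition)
  then show "h1 e = h2 e"
    using eq by (simp add: h1.sum h2.sum)
qed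

theorem adapted_inverse_eq_MP_inverse: "adapted_inverse scale g f H I = MP_inverse scale g f"
  unfolding adapted_inverse_def
proof (rule the_equality)
  show "Vector_Spaces.linear scale scale (MP_inverse scale g f) \<and>
      (\<forall>i\<in>I. \<forall>x\<in>H i. MP_inverse scale g f x = MP_inverse_on scale g (H i) f x)"
    using linear_MP_inverse MP_inverse_on_H by simp
  show "h = MP_inverse scale g f"
    if "Vector_Spaces.linear scale scale h \<and> (\<forall>i\<in>I. \<forall>x\<in>H i. h x = MP_inverse_on scale g (H i) f x)"
    for h
    using that linear_MP_inverse MP_inverse_on_H by (auto intro: linear_eq_on_summands)
qed

end

theorem proposition3p9:
  fixes scale :: "'k::real_field \<Rightarrow> 'v::ab_group_add \<Rightarrow> 'v"
    and cj :: "'k \<Rightarrow> 'k"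
    and g :: "'v \<Rightarrow> 'v \<Rightarrow> 'k"
    and f :: "'v \<Rightarrow> 'v"
    and H :: "nat \<Rightarrow> 'v set"
    and n :: nat
  assumes "RorC cj"
    and "inner_product_space scale cj g"
    and "\<exists>B. finite_dimensional_vector_space scale B"
    and "Vector_Spaces.linear scale scale f"
    and "\<forall>i\<in>{1..n}. module.subspace scale (H i)"
    and "\<forall>i\<in>{1..n}. f ` H i \<subseteq> H i"
    and "is_direct_sum H {1..n}"
    and "\<forall>i\<in>{1..n}. H i \<subseteq> orth_in g UNIV (sum_subspaces H ({1..n} - {i}))"
  shows "adapted_inverse scale g f H {1..n} = MP_inverse scale g f"
proof -
  obtain Basis where "finite_dimensional_vector_space scale Basis"
    using assms(3) by blast
  then have "fd_inner_product_space scale Basis cj g"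
    using assms(2) by (intro fd_inner_product_space.intro fd_inner_product_space_axioms.intro)
  then interpret orthogonal_invariant_decomposition scale Basis cj g f H "{1..n}"
    using assms(4-8)
    by (intro orthogonal_invariant_decomposition.intro orthogonal_invariant_decomposition_axioms.intro) auto
  show ?thesis
    by (rule adapted_inverse_eq_MP_inverse)
qed

end
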